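(* Let $d \ge 2$. For $R \subseteq \{0,1,\dots,d-1\}$ let $\mathrm{err}(R) = \min_{m \in \mathcal{M}_d(R)} \| m - \textsc{max} \|_\infty$, where $\|\cdot\|_\infty$ is the sup norm of a function over the unit cube $[0,1]^d$ and $\textsc{max}(x)=\max_i x_i$. Then $$\mathrm{err}(\{d-1\}) = \frac{1}{2d-1},\qquad \mathrm{err}(\{0, d-1\}) = \frac{1}{2d},\qquad \mathrm{err}(\{0,1,2,\dots,d-1\}) \le \frac{1}{2^d}.$$
   Context: For $x\in\mathbb{R}^d$ and nonempty $A\subseteq\{1,\dots,d\}$, the subpool max is $s(x;A)=\max\{x_j:j\in A\}$. $C(k,r,d)$ denotes the $k$-th $r$-element subset of $\{1,\dots,d\}$ in lexicographic order, $k=1,\dots,\binom{d}{r}$. For $R\subseteq\{0,1,\dots,d-1\}$, $\mathcal{M}_d(R)$ is the set of functions $$x \mapsto \beta_0 + \sum_{r\in R\setminus\{0\}} \sum_{j=1}^{\binom{d}{r}} \beta_r^j\, s(x; C(j,r,d)), \qquad \beta_0,\beta_r^j\in\mathbb{R},$$ where the intercept $\beta_0$ is included if $0\in R$ and omitted (i.e. $\beta_0=0$) if $0\notin R$. *)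

theory Defs
  imports Complex_Main
begin

text \<open>Points of R^d are functions nat => real; only coordinates 1..d matter.\<close>

definition subpool_max :: "(nat \<Rightarrow> real) \<Rightarrow> nat set \<Rightarrow> real" where
  "subpool_max x A = Max (x ` A)"

definition max_fn :: "nat \<Rightarrow> (nat \<Rightarrow> real) \<Rightarrow> real" where
  "max_fn d x = Max (x ` {1..d})"

text \<open>The r-element subsets of {1..d}; indexing them by the subset itself is
  the same as indexing by their lexicographic rank C(j,r,d).\<close>
definition rsubsets :: "nat \<Rightarrow> nat \<Rightarrow> nat set set" where
  "rsubsets r d = {A. A \<subseteq> {1..d} \<and> card A = r}"

definition model :: "nat \<Rightarrow> nat set \<Rightarrow> real \<Rightarrow> (nat set \<Rightarrow> real) \<Rightarrow> (nat \<Rightarrow> real) \<Rightarrow> real" where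
  "model d R b0 b x = (if 0 \<in> R then b0 else 0)
      + (\<Sum>r\<in>R - {0}. \<Sum>A\<in>rsubsets r d. b A * subpool_max x A)"

definition models :: "nat \<Rightarrow> nat set \<Rightarrow> ((nat \<Rightarrow> real) \<Rightarrow> real) set" where
  "models d R = {model d R b0 b | b0 b. True}"

definition unit_cube :: "nat \<Rightarrow> (nat \<Rightarrow> real) set" where
  "unit_cube d = {x. \<forall>j\<in>{1..d}. 0 \<le> x j \<and> x j \<le> 1}"

definition sup_norm :: "nat \<Rightarrow> ((nat \<Rightarrow> real) \<Rightarrow> real) \<Rightarrow> real" where
  "sup_norm d f = Sup ((\<lambda>x. \<bar>f x\<bar>) ` unit_cube d)"

definition err :: "nat \<Rightarrow> nat set \<Rightarrow> real" where
  "err d R = Inf ((\<lambda>m. sup_norm d (\<lambda>x. m x - max_fn d x)) ` models d R)"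

end

theory Submission
  imports Defs
begin

text \<open>
  Along the path that moves all coordinates of x sharing one value t, 0 < t < 1,
  between the neighbouring values a < t < b of x (or 0 and 1), every subpool max
  either follows the moved value or ignores it, so the error m - max of a model m
  is affine there. Merging t into a or b lowers the number of coordinate values
  outside {0, 1}; hence |m - max| is largest at a vertex of the cube.

  At a vertex with k ones, a model whose coefficients depend only on |A| has the
  value beta_0 + sum_r beta_r (C(d, r) - C(d - k, r)). Explicit coefficients give
  the upper bounds; for all layers, beta_r = -(-1)^d (-2)^r / 2^d makes the error
  at every vertex equal to +-1/2^d by the binomial theorem.

  For the lower bounds the vertices 0, 1 and the unit vectors suffice: adding up
  the errors at the unit vectors counts every (d-1)-subset d - 1 times, and
  together with the error at 1 this gives 1 - beta_0 <= (2d - 1) s, while the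
  vertex 0 gives |beta_0| <= s.
\<close>

lemma finite_rsubsets: "finite (rsubsets r d)"
  unfolding rsubsets_def by (rule finite_subset[of _ "Pow {1..d}"]) auto

lemma rsubsetsD:
  assumes "A \<in> rsubsets r d" "r \<ge> 1"
  shows "A \<noteq> {}" "A \<subseteq> {1..d}"
  using assms unfolding rsubsets_def by auto

lemma subpool_max_in_image:
  assumes "A \<noteq> {}" "A \<subseteq> {1..d}"
  shows "subpool_max x A \<in> x ` A"
  unfolding subpool_max_def using assms by (intro Max_in) (auto intro: finite_subset)

lemma subpool_max_in_unit_interval:
  assumes "A \<noteq> {}" "A \<subseteq> {1..d}" "x \<in> unit_cube d"
  shows "0 \<le> subpool_max x A" "subpool_max x A \<le> 1"
  using subpool_max_in_image[OF assms(1,2), of x] assms(2,3) by (auto simp: unit_cube_def)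

lemma max_fn_eq_subpool_max: "max_fn d x = subpool_max x {1..d}"
  by (simp add: max_fn_def subpool_max_def)

lemma zero_in_unit_cube: "(\<lambda>_. 0) \<in> unit_cube d"
  by (simp add: unit_cube_def)

lemma model_error_bounded:
  assumes "d \<ge> 1"
  shows "bdd_above ((\<lambda>x. \<bar>model d R b0 \<beta> x - max_fn d x\<bar>) ` unit_cube d)"
proof (rule bdd_aboveI2)
  fix x assume x: "x \<in> unit_cube d"
  have "\<bar>\<beta> A * subpool_max x A\<bar> \<le> \<bar>\<beta> A\<bar>" if "r \<in> R - {0}" "A \<in> rsubsets r d" for r A
    using subpool_max_in_unit_interval[OF rsubsetsD[OF that(2)] x] that(1)
    by (simp add: abs_mult mult_left_le)
  then have "\<bar>\<Sum>r\<in>R-{0}. \<Sum>A\<in>rsubsets r d. \<beta> A * subpool_max x A\<bar>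
      \<le> (\<Sum>r\<in>R-{0}. \<Sum>A\<in>rsubsets r d. \<bar>\<beta> A\<bar>)"
    by (intro order.trans[OF sum_abs] sum_mono order.trans[OF sum_abs]) auto
  moreover have "0 \<le> max_fn d x" "max_fn d x \<le> 1"
    using subpool_max_in_unit_interval[OF _ _ x, of "{1..d}"] assms
    by (auto simp: max_fn_eq_subpool_max)
  ultimately show "\<bar>model d R b0 \<beta> x - max_fn d x\<bar>
      \<le> \<bar>b0\<bar> + (\<Sum>r\<in>R-{0}. \<Sum>A\<in>rsubsets r d. \<bar>\<beta> A\<bar>) + 1"
    unfolding model_def by (smt (verit))
qed

lemma abs_le_sup_norm:
  assumes "bdd_above ((\<lambda>x. \<bar>f x\<bar>) ` unit_cube d)" "x \<in> unit_cube d"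
  shows "\<bar>f x\<bar> \<le> sup_norm d f"
  unfolding sup_norm_def using assms by (intro cSup_upper) auto

lemma sup_norm_le:
  assumes "\<And>x. x \<in> unit_cube d \<Longrightarrow> \<bar>f x\<bar> \<le> v"
  shows "sup_norm d f \<le> v"
  unfolding sup_norm_def using assms zero_in_unit_cube by (intro cSup_least) auto

lemma model_error_le_sup_norm:
  assumes "d \<ge> 1" "x \<in> unit_cube d"
  shows "\<bar>model d R b0 \<beta> x - max_fn d x\<bar> \<le> sup_norm d (\<lambda>x. model d R b0 \<beta> x - max_fn d x)"
  using abs_le_sup_norm[OF model_error_bounded] assms by blast

lemma err_le_sup_norm:
  assumes "d \<ge> 1"
  shows "err d R \<le> sup_norm d (\<lambda>x. model d R b0 \<beta> x - max_fn d x)"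
  unfolding err_def
proof (rule cInf_lower)
  show "sup_norm d (\<lambda>x. model d R b0 \<beta> x - max_fn d x)
      \<in> (\<lambda>m. sup_norm d (\<lambda>x. m x - max_fn d x)) ` models d R"
    unfolding models_def by blast
  have "0 \<le> sup_norm d (\<lambda>x. model d R c0 \<gamma> x - max_fn d x)" for c0 \<gamma>
    using model_error_le_sup_norm[OF assms zero_in_unit_cube] by (rule order.trans[OF abs_ge_zero])
  then show "bdd_below ((\<lambda>m. sup_norm d (\<lambda>x. m x - max_fn d x)) ` models d R)"
    unfolding models_def by (intro bdd_belowI2[where m = 0]) auto
qed

lemma le_err:
  assumes "\<And>b0 \<beta>. v \<le> sup_norm d (\<lambda>x. model d R b0 \<beta> x - max_fn d x)"
  shows "v \<le> err d R"
  unfolding err_def models_def using assms by (intro cInf_greatest) auto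

lemma Max_image_mono_on:
  fixes f :: "'a::linorder \<Rightarrow> 'b::linorder"
  assumes "mono_on S f" "finite S" "S \<noteq> {}"
  shows "Max (f ` S) = f (Max S)"
proof (rule Max_eqI)
  show "y \<le> f (Max S)" if "y \<in> f ` S" for y
    using that assms by (auto intro!: mono_onD[OF assms(1)] Max_in)
qed (use assms in auto)

definition replace_value :: "(nat \<Rightarrow> real) \<Rightarrow> real \<Rightarrow> real \<Rightarrow> nat \<Rightarrow> real" where
  "replace_value x t s = (\<lambda>j. if x j = t then s else x j)"

lemma subpool_max_replace_value:
  assumes "finite A" "A \<noteq> {}" "a \<le> s" "s \<le> b" "a \<le> t" "t \<le> b"
    and sep: "\<forall>j\<in>A. x j \<noteq> t \<longrightarrow> x j \<le> a \<or> b \<le> x j"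
  shows "subpool_max (replace_value x t s) A
    = (if subpool_max x A = t then s else subpool_max x A)"
proof -
  let ?f = "\<lambda>v. if v = t then s else v"
  have "mono_on (x ` A) ?f"
    using sep assms(3-6) by (auto intro!: mono_onI) force+
  then have "Max (?f ` x ` A) = ?f (Max (x ` A))"
    using assms(1,2) by (intro Max_image_mono_on) auto
  moreover have "replace_value x t s = ?f \<circ> x"
    by (auto simp: replace_value_def)
  ultimately show ?thesis
    unfolding subpool_max_def by (simp only: image_comp)
qed

lemma model_error_interpolate:
  assumes "d \<ge> 1" "a < t" "t < b"
    and sep: "\<forall>j\<in>{1..d}. x j \<noteq> t \<longrightarrow> x j \<le> a \<or> b \<le> x j"
  defines "l \<equiv> (b - t) / (b - a)"
  shows "model d R b0 \<beta> x - max_fn d x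
    = l * (model d R b0 \<beta> (replace_value x t a) - max_fn d (replace_value x t a))
      + (1 - l) * (model d R b0 \<beta> (replace_value x t b) - max_fn d (replace_value x t b))"
proof -
  have "l * (b - a) = b - t"
    using assms(2,3) unfolding l_def by simp
  then have "l * a + (1 - l) * b = t"
    by (simp add: algebra_simps)
  have interpolate: "subpool_max x A
      = l * subpool_max (replace_value x t a) A + (1 - l) * subpool_max (replace_value x t b) A"
    if "A \<noteq> {}" "A \<subseteq> {1..d}" for A
  proof -
    have "subpool_max (replace_value x t s) A
        = (if subpool_max x A = t then s else subpool_max x A)" if "s \<in> {a, b}" for s
      using \<open>A \<subseteq> {1..d}\<close> sep assms(2,3) that
      by (intro subpool_max_replace_value[where a = a and b = b, OF finite_subset \<open>A \<noteq> {}\<close>]) auto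
    with \<open>l * a + (1 - l) * b = t\<close> show ?thesis
      by (simp add: algebra_simps)
  qed
  let ?S = "\<lambda>y. \<Sum>r\<in>R-{0}. \<Sum>A\<in>rsubsets r d. \<beta> A * subpool_max y A"
  have "?S x = (\<Sum>r\<in>R-{0}. \<Sum>A\<in>rsubsets r d.
        l * (\<beta> A * subpool_max (replace_value x t a) A)
        + (1 - l) * (\<beta> A * subpool_max (replace_value x t b) A))"
    by (intro sum.cong refl) (auto simp: interpolate[OF rsubsetsD] algebra_simps)
  also have "\<dots> = l * ?S (replace_value x t a) + (1 - l) * ?S (replace_value x t b)"
    by (simp add: sum.distrib sum_distrib_left)
  finally have "?S x = l * ?S (replace_value x t a) + (1 - l) * ?S (replace_value x t b)" .
  moreover have "max_fn d x
      = l * max_fn d (replace_value x t a) + (1 - l) * max_fn d (replace_value x t b)"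
    unfolding max_fn_eq_subpool_max using interpolate assms(1) by simp
  ultimately show ?thesis
    unfolding model_def by (simp add: sum.distrib sum_distrib_left algebra_simps)
qed

definition cube_vertices :: "nat \<Rightarrow> (nat \<Rightarrow> real) set" where
  "cube_vertices d = {y. \<forall>j\<in>{1..d}. y j = 0 \<or> y j = 1}"

lemma neighbour_values:
  fixes V :: "real set"
  assumes "finite V" "0 < t" "t < 1"
  obtains a b where "a \<in> insert 0 V" "b \<in> insert 1 V" "0 \<le> a" "a < t" "t < b" "b \<le> 1"
    "\<forall>v\<in>V. v \<noteq> t \<longrightarrow> v \<le> a \<or> b \<le> v"
proof -
  let ?L = "insert 0 {v \<in> V. v < t}" and ?U = "insert 1 {v \<in> V. t < v}"
  have fin: "finite ?L" "finite ?U"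
    using assms(1) by auto
  have "Max ?L \<in> ?L" "Min ?U \<in> ?U"
    using fin by (intro Max_in Min_in; simp)+
  moreover have "0 \<le> Max ?L" "Min ?U \<le> 1"
    using fin by simp_all
  moreover have "v \<le> Max ?L \<or> Min ?U \<le> v" if "v \<in> V" "v \<noteq> t" for v
    using that fin by (cases "v < t") auto
  ultimately show ?thesis
    using that[of "Max ?L" "Min ?U"] assms(2,3) by auto
qed

lemma card_interior_values_replace_value_less:
  assumes "finite I" "t \<in> x ` I - {0, 1}" "s \<in> insert 0 (insert 1 (x ` I))" "s \<noteq> t"
  shows "card (replace_value x t s ` I - {0, 1}) < card (x ` I - {0, 1})"
proof (rule psubset_card_mono)
  show "finite (x ` I - {0, 1})"
    using assms(1) by simp
  have "replace_value x t s ` I - {0, 1} \<subseteq> x ` I - {0, 1}"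
    using assms(3) by (auto simp: replace_value_def)
  moreover have "t \<notin> replace_value x t s ` I"
    using assms(4) by (auto simp: replace_value_def)
  ultimately show "replace_value x t s ` I - {0, 1} \<subset> x ` I - {0, 1}"
    using assms(2) by blast
qed

lemma abs_le_from_cube_vertices:
  fixes E :: "(nat \<Rightarrow> real) \<Rightarrow> real"
  assumes interpolate: "\<And>x t a b. x \<in> unit_cube d \<Longrightarrow> a < t \<Longrightarrow> t < b \<Longrightarrow>
      (\<forall>j\<in>{1..d}. x j \<noteq> t \<longrightarrow> x j \<le> a \<or> b \<le> x j) \<Longrightarrow>
      E x = (b - t) / (b - a) * E (replace_value x t a)
        + (1 - (b - t) / (b - a)) * E (replace_value x t b)"
    and vertices: "\<And>y. y \<in> cube_vertices d \<Longrightarrow> \<bar>E y\<bar> \<le> \<epsilon>"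
    and "x \<in> unit_cube d"
  shows "\<bar>E x\<bar> \<le> \<epsilon>"
  using \<open>x \<in> unit_cube d\<close>
proof (induction "card (x ` {1..d} - {0, 1})" arbitrary: x rule: less_induct)
  case less
  show ?case
  proof (cases "x \<in> cube_vertices d")
    case True
    then show ?thesis by (rule vertices)
  next
    case False
    then obtain t where t: "t \<in> x ` {1..d} - {0, 1}"
      by (auto simp: cube_vertices_def)
    then have "0 < t" "t < 1"
      using less.prems by (force simp: unit_cube_def)+
    then obtain a b where ab: "a \<in> insert 0 (x ` {1..d})" "b \<in> insert 1 (x ` {1..d})"
        "0 \<le> a" "a < t" "t < b" "b \<le> 1"
      and sep: "\<forall>v\<in>x ` {1..d}. v \<noteq> t \<longrightarrow> v \<le> a \<or> b \<le> v"
      by (rule neighbour_values[OF finite_imageI[OF finite_atLeastAtMost]])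
    have "\<bar>E (replace_value x t s)\<bar> \<le> \<epsilon>" if "s \<in> {a, b}" for s
    proof (rule less.hyps)
      show "card (replace_value x t s ` {1..d} - {0, 1}) < card (x ` {1..d} - {0, 1})"
        using that ab t by (intro card_interior_values_replace_value_less) auto
      show "replace_value x t s \<in> unit_cube d"
        using less.prems that ab by (auto simp: unit_cube_def replace_value_def)
    qed
    then have "\<bar>E (replace_value x t a)\<bar> \<le> \<epsilon>" "\<bar>E (replace_value x t b)\<bar> \<le> \<epsilon>"
      by auto
    moreover define l where "l = (b - t) / (b - a)"
    moreover have "0 \<le> l" "l \<le> 1"
      using ab unfolding l_def by (auto simp: field_simps)
    ultimately have "l * E (replace_value x t a) + (1 - l) * E (replace_value x t b) \<le> \<epsilon>"
      "l * - E (replace_value x t a) + (1 - l) * - E (replace_value x t b) \<le> \<epsilon>"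
      by (intro convex_bound_le; auto)+
    moreover have "E x = l * E (replace_value x t a) + (1 - l) * E (replace_value x t b)"
      unfolding l_def using less.prems ab sep by (intro interpolate) auto
    ultimately show ?thesis
      by (simp add: abs_le_iff)
  qed
qed

lemma sup_norm_model_error_le:
  assumes "d \<ge> 1" "\<And>y. y \<in> cube_vertices d \<Longrightarrow> \<bar>model d R b0 \<beta> y - max_fn d y\<bar> \<le> \<epsilon>"
  shows "sup_norm d (\<lambda>x. model d R b0 \<beta> x - max_fn d x) \<le> \<epsilon>"
  by (rule sup_norm_le, rule abs_le_from_cube_vertices[OF model_error_interpolate[OF assms(1)] assms(2)])

lemma cube_vertices_subset_unit_cube: "cube_vertices d \<subseteq> unit_cube d"
  by (auto simp: cube_vertices_def unit_cube_def)

definition ones :: "nat \<Rightarrow> (nat \<Rightarrow> real) \<Rightarrow> nat set" where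
  "ones d y = {j \<in> {1..d}. y j = 1}"

lemma subpool_max_at_vertex:
  assumes "y \<in> cube_vertices d" "A \<noteq> {}" "A \<subseteq> {1..d}"
  shows "subpool_max y A = (if A \<inter> ones d y = {} then 0 else 1)"
proof -
  obtain j where j: "j \<in> A" "subpool_max y A = y j"
    using subpool_max_in_image[OF assms(2,3)] by blast
  have vertex: "y i = 0 \<or> y i = 1" if "i \<in> A" for i
    using that assms(1,3) by (auto simp: cube_vertices_def)
  show ?thesis
  proof (cases "A \<inter> ones d y = {}")
    case True
    then show ?thesis
      using j vertex[OF j(1)] subsetD[OF assms(3) j(1)] by (auto simp: ones_def)
  next
    case False
    then obtain i where "i \<in> A" "y i = 1"
      by (auto simp: ones_def)
    then have "1 \<le> subpool_max y A"
      unfolding subpool_max_def using finite_subset[OF assms(3)] by force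
    then show ?thesis
      using False j vertex[OF j(1)] by auto
  qed
qed

lemma max_fn_at_vertex:
  assumes "y \<in> cube_vertices d" "d \<ge> 1"
  shows "max_fn d y = (if ones d y = {} then 0 else 1)"
proof -
  have "{1..d} \<inter> ones d y = ones d y"
    by (auto simp: ones_def)
  then show ?thesis
    using subpool_max_at_vertex[OF assms(1), of "{1..d}"] assms(2)
    by (simp add: max_fn_eq_subpool_max)
qed

lemma model_at_vertex:
  assumes "y \<in> cube_vertices d"
  shows "model d R b0 \<beta> y = (if 0 \<in> R then b0 else 0)
    + (\<Sum>r\<in>R-{0}. \<Sum>A\<in>{A \<in> rsubsets r d. A \<inter> ones d y \<noteq> {}}. \<beta> A)"
proof -
  have "(\<Sum>A\<in>rsubsets r d. \<beta> A * subpool_max y A)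
      = (\<Sum>A\<in>{A \<in> rsubsets r d. A \<inter> ones d y \<noteq> {}}. \<beta> A)" if "r \<in> R - {0}" for r
  proof -
    have "(\<Sum>A\<in>rsubsets r d. \<beta> A * subpool_max y A)
        = (\<Sum>A\<in>rsubsets r d. if A \<inter> ones d y \<noteq> {} then \<beta> A else 0)"
      using that subpool_max_at_vertex[OF assms rsubsetsD] by (intro sum.cong) auto
    then show ?thesis
      by (simp add: sum.inter_filter[OF finite_rsubsets])
  qed
  then show ?thesis
    unfolding model_def by simp
qed

lemma card_rsubsets_meeting:
  assumes "K \<subseteq> {1..d}"
  shows "real (card {A \<in> rsubsets r d. A \<inter> K \<noteq> {}})
    = real (d choose r) - real ((d - card K) choose r)"
proof -
  have "{A \<in> rsubsets r d. A \<inter> K = {}} = {A. A \<subseteq> {1..d} - K \<and> card A = r}"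
    by (auto simp: rsubsets_def)
  then have "card {A \<in> rsubsets r d. A \<inter> K = {}} = (d - card K) choose r"
    using n_subsets[of "{1..d} - K" r] assms by (simp add: card_Diff_subset finite_subset)
  moreover have "card (rsubsets r d) = d choose r"
    using n_subsets[of "{1..d}" r] by (simp add: rsubsets_def)
  moreover have "rsubsets r d = {A \<in> rsubsets r d. A \<inter> K \<noteq> {}} \<union> {A \<in> rsubsets r d. A \<inter> K = {}}"
    by auto
  then have "card (rsubsets r d)
      = card {A \<in> rsubsets r d. A \<inter> K \<noteq> {}} + card {A \<in> rsubsets r d. A \<inter> K = {}}"
    by (metis (no_types, lifting) card_Un_disjoint disjoint_iff finite_Un finite_rsubsets mem_Collect_eq)
  ultimately show ?thesis
    by simp
qed

lemma symmetric_model_at_vertex: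
  assumes "y \<in> cube_vertices d"
  shows "model d R b0 (\<lambda>A. \<beta> (card A)) y = (if 0 \<in> R then b0 else 0)
    + (\<Sum>r\<in>R-{0}. \<beta> r * (real (d choose r) - real ((d - card (ones d y)) choose r)))"
proof -
  have "(\<Sum>A\<in>{A \<in> rsubsets r d. A \<inter> ones d y \<noteq> {}}. \<beta> (card A))
      = \<beta> r * real (card {A \<in> rsubsets r d. A \<inter> ones d y \<noteq> {}})" for r
    by (simp add: rsubsets_def)
  moreover have "ones d y \<subseteq> {1..d}"
    by (auto simp: ones_def)
  ultimately show ?thesis
    unfolding model_at_vertex[OF assms] by (simp add: card_rsubsets_meeting)
qed

lemma sup_norm_symmetric_model_error_le:
  assumes "d \<ge> 1"
    and "\<And>k. k \<le> d \<Longrightarrow> \<bar>(if 0 \<in> R then b0 else 0)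
      + (\<Sum>r\<in>R-{0}. \<beta> r * (real (d choose r) - real ((d - k) choose r)))
      - (if k = 0 then 0 else 1)\<bar> \<le> \<epsilon>"
  shows "sup_norm d (\<lambda>x. model d R b0 (\<lambda>A. \<beta> (card A)) x - max_fn d x) \<le> \<epsilon>"
proof (rule sup_norm_model_error_le[OF assms(1)])
  fix y assume y: "y \<in> cube_vertices d"
  have "card (ones d y) \<le> card {1..d}"
    by (intro card_mono) (auto simp: ones_def)
  moreover have "ones d y = {} \<longleftrightarrow> card (ones d y) = 0"
    by (simp add: ones_def)
  ultimately show "\<bar>model d R b0 (\<lambda>A. \<beta> (card A)) y - max_fn d y\<bar> \<le> \<epsilon>"
    using assms(2)[of "card (ones d y)"]
    by (simp add: symmetric_model_at_vertex[OF y] max_fn_at_vertex[OF y assms(1)])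
qed

lemma sum_rsubsets_containing:
  fixes f :: "nat set \<Rightarrow> real"
  shows "(\<Sum>i\<in>{1..d}. \<Sum>A\<in>{A \<in> rsubsets r d. i \<in> A}. f A) = real r * (\<Sum>A\<in>rsubsets r d. f A)"
proof -
  have "(\<Sum>i\<in>{1..d}. \<Sum>A\<in>{A \<in> rsubsets r d. i \<in> A}. f A)
      = (\<Sum>A\<in>rsubsets r d. \<Sum>i\<in>{i \<in> {1..d}. i \<in> A}. f A)"
    using finite_rsubsets by (rule sum.swap_restrict[OF finite_atLeastAtMost])
  also have "\<dots> = (\<Sum>A\<in>rsubsets r d. real r * f A)"
  proof (rule sum.cong[OF refl])
    fix A assume "A \<in> rsubsets r d"
    then have "{i \<in> {1..d}. i \<in> A} = A" "card A = r"
      by (auto simp: rsubsets_def)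
    then show "(\<Sum>i\<in>{i \<in> {1..d}. i \<in> A}. f A) = real r * f A"
      by simp
  qed
  finally show ?thesis
    by (simp add: sum_distrib_left)
qed

lemma top_layer_error_lower_bounds:
  fixes b0 :: real and \<beta> :: "nat set \<Rightarrow> real"
  assumes "d \<ge> 2" "R - {0} = {d - 1}"
  defines "s \<equiv> sup_norm d (\<lambda>x. model d R b0 \<beta> x - max_fn d x)"
    and "c \<equiv> if 0 \<in> R then b0 else 0"
  shows "\<bar>c\<bar> \<le> s" "1 - c \<le> (2 * real d - 1) * s"
proof -
  let ?rs = "rsubsets (d - 1) d"
  have d: "d \<ge> 1" "d - 1 \<ge> 1"
    using assms(1) by auto
  have error_at_vertex: "\<bar>c + (\<Sum>A\<in>{A \<in> ?rs. A \<inter> ones d y \<noteq> {}}. \<beta> A)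
      - (if ones d y = {} then 0 else 1)\<bar> \<le> s" if "y \<in> cube_vertices d" for y
  proof -
    have "\<bar>model d R b0 \<beta> y - max_fn d y\<bar> \<le> s"
      unfolding s_def using d(1) subsetD[OF cube_vertices_subset_unit_cube that]
      by (rule model_error_le_sup_norm)
    then show ?thesis
      unfolding model_at_vertex[OF that] max_fn_at_vertex[OF that d(1)] c_def assms(2) by simp
  qed
  have "ones d (\<lambda>_. 0) = {}"
    by (simp add: ones_def)
  then show "\<bar>c\<bar> \<le> s"
    using error_at_vertex[of "\<lambda>_. 0"] by (simp add: cube_vertices_def)
  have "ones d (\<lambda>_. 1) = {1..d}" "{A \<in> ?rs. A \<inter> {1..d} \<noteq> {}} = ?rs"
    using rsubsetsD[OF _ d(2)] by (auto simp: ones_def) blast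
  then have at_ones: "c + (\<Sum>A\<in>?rs. \<beta> A) - 1 \<le> s"
    using error_at_vertex[of "\<lambda>_. 1"] d by (simp add: cube_vertices_def)
  have at_unit_vector: "1 - c - (\<Sum>A\<in>{A \<in> ?rs. i \<in> A}. \<beta> A) \<le> s" if "i \<in> {1..d}" for i
  proof -
    let ?e = "\<lambda>j. if j = i then 1 else 0 :: real"
    have "?e \<in> cube_vertices d"
      by (simp add: cube_vertices_def)
    moreover have "ones d ?e = {i}" "\<And>A. A \<inter> {i} \<noteq> {} \<longleftrightarrow> i \<in> A"
      using that by (auto simp: ones_def)
    ultimately show ?thesis
      using error_at_vertex[of ?e] by simp
  qed
  have "(\<Sum>i\<in>{1..d}. 1 - c - (\<Sum>A\<in>{A \<in> ?rs. i \<in> A}. \<beta> A)) \<le> (\<Sum>i\<in>{1..d}. s)"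
    using at_unit_vector by (intro sum_mono)
  then have "real d * (1 - c) - (real d - 1) * (\<Sum>A\<in>?rs. \<beta> A) \<le> real d * s"
    using d sum_rsubsets_containing[of \<beta> "d - 1" d] by (simp add: sum_subtractf of_nat_diff)
  moreover have "(real d - 1) * (c + (\<Sum>A\<in>?rs. \<beta> A) - 1) \<le> (real d - 1) * s"
    using at_ones d by (intro mult_left_mono) auto
  ultimately show "1 - c \<le> (2 * real d - 1) * s"
    by (simp add: algebra_simps)
qed

lemma top_layer_binomial_difference:
  assumes "d \<ge> 1" "k \<le> d"
  shows "real (d choose (d - 1)) - real ((d - k) choose (d - 1))
    = (if k = 0 then 0 else if k = 1 then real d - 1 else real d)"
proof -
  have "d choose (d - 1) = d"
    using binomial_symmetric[of "d - 1" d] assms(1) by simp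
  then show ?thesis
    using assms by (auto simp: binomial_eq_0 of_nat_diff)
qed

lemma err_top_layer:
  assumes "d \<ge> 2"
  shows "err d {d - 1} = 1 / (2 * real d - 1)"
proof (rule antisym)
  have R: "0 \<notin> {d - 1}" "{d - 1} - {0} = {d - 1}"
    using assms by auto
  have pos: "2 * real d - 1 > 0"
    using assms by simp
  have "err d {d - 1}
      \<le> sup_norm d (\<lambda>x. model d {d - 1} 0 (\<lambda>A. 2 / (2 * real d - 1)) x - max_fn d x)"
    using assms by (intro err_le_sup_norm) simp
  also have "\<dots> \<le> 1 / (2 * real d - 1)"
  proof (rule sup_norm_symmetric_model_error_le[where \<beta> = "\<lambda>_. 2 / (2 * real d - 1)"])
    fix k assume "k \<le> d"
    then show "\<bar>(if 0 \<in> {d - 1} then 0 else 0)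
        + (\<Sum>r\<in>{d - 1} - {0}. 2 / (2 * real d - 1) * (real (d choose r) - real ((d - k) choose r)))
        - (if k = 0 then 0 else 1)\<bar> \<le> 1 / (2 * real d - 1)"
      using R pos assms top_layer_binomial_difference[of d k] by (auto simp: field_simps)
  qed (use assms in simp)
  finally show "err d {d - 1} \<le> 1 / (2 * real d - 1)" .
  show "1 / (2 * real d - 1) \<le> err d {d - 1}"
  proof (rule le_err)
    fix b0 \<beta>
    show "1 / (2 * real d - 1) \<le> sup_norm d (\<lambda>x. model d {d - 1} b0 \<beta> x - max_fn d x)"
      using top_layer_error_lower_bounds(2)[OF assms R(2), of b0 \<beta>] R(1) pos
      by (simp add: divide_le_eq mult.commute)
  qed
qed

lemma err_top_layer_intercept:
  assumes "d \<ge> 2"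
  shows "err d {0, d - 1} = 1 / (2 * real d)"
proof (rule antisym)
  have R: "{0, d - 1} - {0} = {d - 1}"
    using assms by auto
  have pos: "real d > 0"
    using assms by simp
  have "err d {0, d - 1}
      \<le> sup_norm d (\<lambda>x. model d {0, d - 1} (1 / (2 * real d)) (\<lambda>A. 1 / real d) x - max_fn d x)"
    using assms by (intro err_le_sup_norm) simp
  also have "\<dots> \<le> 1 / (2 * real d)"
  proof (rule sup_norm_symmetric_model_error_le[where \<beta> = "\<lambda>_. 1 / real d"])
    fix k assume "k \<le> d"
    then show "\<bar>(if 0 \<in> {0, d - 1} then 1 / (2 * real d) else 0)
        + (\<Sum>r\<in>{0, d - 1} - {0}. 1 / real d * (real (d choose r) - real ((d - k) choose r)))
        - (if k = 0 then 0 else 1)\<bar> \<le> 1 / (2 * real d)"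
      using R pos assms top_layer_binomial_difference[of d k] by (auto simp: field_simps)
  qed (use assms in simp)
  finally show "err d {0, d - 1} \<le> 1 / (2 * real d)" .
  show "1 / (2 * real d) \<le> err d {0, d - 1}"
  proof (rule le_err)
    fix b0 \<beta>
    show "1 / (2 * real d) \<le> sup_norm d (\<lambda>x. model d {0, d - 1} b0 \<beta> x - max_fn d x)"
      using top_layer_error_lower_bounds[OF assms R, of b0 \<beta>] pos
      by (simp add: divide_le_eq algebra_simps)
  qed
qed

lemma sum_neg2_powers_binomial:
  assumes "n \<le> d" "d \<ge> 1"
  shows "(\<Sum>r\<in>{1..<d}. (-2::real) ^ r * real (n choose r))
    = (-1) ^ n - 1 - (if n = d then (-2) ^ d else 0)"
proof -
  define f where "f r = (-2::real) ^ r * real (n choose r)" for r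
  have "(-1::real) ^ n = (\<Sum>r\<le>n. f r)"
    using binomial_ring[of "-2::real" 1 n] by (simp add: f_def mult.commute)
  also have "\<dots> = (\<Sum>r\<le>d. f r)"
    using assms(1) by (intro sum.mono_neutral_left) (auto simp: f_def)
  also have "{..d} = insert 0 (insert d {1..<d})"
    using assms(2) by auto
  finally have "(-1::real) ^ n = f 0 + f d + (\<Sum>r\<in>{1..<d}. f r)"
    using assms(2) by simp
  moreover have "f 0 = 1" "f d = (if n = d then (-2) ^ d else 0)"
    using assms(1) by (auto simp: f_def)
  ultimately show ?thesis
    unfolding f_def by simp
qed

lemma err_all_layers_le:
  assumes "d \<ge> 1"
  shows "err d {0..<d} \<le> 1 / 2 ^ d"
proof -
  define \<alpha> where "\<alpha> = (-1::real) ^ d / 2 ^ d"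
  have \<alpha>: "\<alpha> * (-1) ^ d = 1 / 2 ^ d" "\<alpha> * (-2) ^ d = 1"
    unfolding \<alpha>_def by (simp_all add: power_mult_distrib[symmetric])
  have "err d {0..<d}
      \<le> sup_norm d (\<lambda>x. model d {0..<d} (1 / 2 ^ d) (\<lambda>A. - \<alpha> * (-2) ^ card A) x - max_fn d x)"
    using assms by (rule err_le_sup_norm)
  also have "\<dots> \<le> 1 / 2 ^ d"
  proof (rule sup_norm_symmetric_model_error_le[OF assms, where \<beta> = "\<lambda>r. - \<alpha> * (-2) ^ r"])
    fix k assume "k \<le> d"
    have "{0..<d} - {0} = {1..<d}"
      by auto
    moreover have "(\<Sum>r\<in>{1..<d}. - \<alpha> * (-2) ^ r * (real (d choose r) - real ((d - k) choose r)))
      = - \<alpha> * ((\<Sum>r\<in>{1..<d}. (-2) ^ r * real (d choose r))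
          - (\<Sum>r\<in>{1..<d}. (-2) ^ r * real ((d - k) choose r)))"
      unfolding sum_subtractf[symmetric] sum_distrib_left by (intro sum.cong) (simp_all add: algebra_simps)
    ultimately have "(if 0 \<in> {0..<d} then 1 / 2 ^ d else 0)
        + (\<Sum>r\<in>{0..<d} - {0}. - \<alpha> * (-2) ^ r * (real (d choose r) - real ((d - k) choose r)))
        - (if k = 0 then 0 else 1)
      = 1 / 2 ^ d - \<alpha> * ((\<Sum>r\<in>{1..<d}. (-2) ^ r * real (d choose r))
          - (\<Sum>r\<in>{1..<d}. (-2) ^ r * real ((d - k) choose r))) - (if k = 0 then 0 else 1)"
      using assms by simp
    also have "\<dots> = (if k = 0 then 1 / 2 ^ d else \<alpha> * (-1) ^ (d - k))"
    proof (cases "k = 0")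
      case False
      then have sums: "(\<Sum>r\<in>{1..<d}. (-2) ^ r * real (d choose r)) = (-1) ^ d - 1 - (-2) ^ d"
          "(\<Sum>r\<in>{1..<d}. (-2) ^ r * real ((d - k) choose r)) = (-1) ^ (d - k) - 1"
        using sum_neg2_powers_binomial[of d d] sum_neg2_powers_binomial[of "d - k" d] assms \<open>k \<le> d\<close>
        by simp_all
      show ?thesis
        unfolding sums using False \<alpha> by (simp add: algebra_simps)
    qed simp
    finally show "\<bar>(if 0 \<in> {0..<d} then 1 / 2 ^ d else 0)
        + (\<Sum>r\<in>{0..<d} - {0}. - \<alpha> * (-2) ^ r * (real (d choose r) - real ((d - k) choose r)))
        - (if k = 0 then 0 else 1)\<bar> \<le> 1 / 2 ^ d"
      by (simp add: \<alpha>_def abs_mult)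
  qed
  finally show ?thesis .
qed

theorem theorem2:
  fixes d :: nat
  assumes "d \<ge> 2"
  shows "err d {d - 1} = 1 / (2 * real d - 1) \<and>
         err d {0, d - 1} = 1 / (2 * real d) \<and>
         err d {0..<d} \<le> 1 / 2 ^ d"
  using err_top_layer[OF assms] err_top_layer_intercept[OF assms] err_all_layers_le assms
  by simp

end
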